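(* The Banach lattice $\ell_2$ (with coordinatewise order) contains a basis $(u_i)$ which is isometrically equivalent to the canonical basis $(e_i)$ of $\ell_2$ (i.e. $(u_i)$ is an orthonormal basis) and which is neither bibasic nor uniformly quasi-greedy.
   Context: A sequence $(x_k)$ of nonzero vectors in a Banach lattice is bibasic if there is $M\ge1$ with $\|\bigvee_{n=1}^m|\sum_{k=1}^na_kx_k|\|\le M\|\sum_{k=1}^ma_kx_k\|$ for all $m$ and scalars $a_k$. A semi-normalized basic sequence $(x_k)$ with span $E$ and biorthogonal functionals $x_k^*$ is uniformly quasi-greedy if $\sup_m\sup_{x\in E,\|x\|=1}\|\bigvee_{n=1}^m|\mathcal{G}_n(x)|\|<\infty$, where $\mathcal{G}_n(x)=\sum_{j=1}^n x^*_{\rho(j)}(x)x_{\rho(j)}$ and $\rho$ is the natural greedy ordering of $x$ (indices listed by non-increasing $|x_k^*(x)|$, ties broken by increasing index). *)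

theory Defs
  imports "HOL-Analysis.Analysis"
begin

definition l2 :: "(nat \<Rightarrow> real) set" where
  "l2 = {f. summable (\<lambda>i. (f i)\<^sup>2)}"

definition l2norm :: "(nat \<Rightarrow> real) \<Rightarrow> real" where
  "l2norm f = sqrt (\<Sum>i. (f i)\<^sup>2)"

definition l2inner :: "(nat \<Rightarrow> real) \<Rightarrow> (nat \<Rightarrow> real) \<Rightarrow> real" where
  "l2inner f g = (\<Sum>i. f i * g i)"

definition lpsum :: "(nat \<Rightarrow> nat \<Rightarrow> real) \<Rightarrow> (nat \<Rightarrow> real) \<Rightarrow> nat \<Rightarrow> nat \<Rightarrow> real" where
  "lpsum u a n = (\<lambda>i. \<Sum>k<n. a k * u k i)"

definition has_expansion :: "(nat \<Rightarrow> nat \<Rightarrow> real) \<Rightarrow> (nat \<Rightarrow> real) \<Rightarrow> (nat \<Rightarrow> real) \<Rightarrow> bool" where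
  "has_expansion u a x \<longleftrightarrow> LIMSEQ (\<lambda>n. l2norm (\<lambda>i. lpsum u a n i - x i)) 0"

definition is_basis_l2 :: "(nat \<Rightarrow> nat \<Rightarrow> real) \<Rightarrow> bool" where
  "is_basis_l2 u \<longleftrightarrow> (\<forall>k. u k \<in> l2) \<and> (\<forall>x\<in>l2. \<exists>!a. has_expansion u a x)"

definition canon :: "nat \<Rightarrow> nat \<Rightarrow> real" where
  "canon k = (\<lambda>i. if i = k then 1 else 0)"

definition isometrically_equivalent :: "(nat \<Rightarrow> nat \<Rightarrow> real) \<Rightarrow> (nat \<Rightarrow> nat \<Rightarrow> real) \<Rightarrow> bool" where
  "isometrically_equivalent u v \<longleftrightarrow>
     (\<forall>n a. l2norm (lpsum u a n) = l2norm (lpsum v a n))"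

text \<open>Bibasic (indices start at 0; m ranges over positive lengths).\<close>
definition bibasic :: "(nat \<Rightarrow> nat \<Rightarrow> real) \<Rightarrow> bool" where
  "bibasic x \<longleftrightarrow> (\<exists>M\<ge>1. \<forall>m\<ge>1. \<forall>a.
      l2norm (\<lambda>i. Max ((\<lambda>n. \<bar>lpsum x a n i\<bar>) ` {1..m})) \<le> M * l2norm (lpsum x a m))"

text \<open>Closed span E of a basic sequence: vectors admitting an expansion.\<close>
definition span_E :: "(nat \<Rightarrow> nat \<Rightarrow> real) \<Rightarrow> (nat \<Rightarrow> real) set" where
  "span_E u = {x \<in> l2. \<exists>a. has_expansion u a x}"

definition coef :: "(nat \<Rightarrow> nat \<Rightarrow> real) \<Rightarrow> (nat \<Rightarrow> real) \<Rightarrow> nat \<Rightarrow> real" where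
  "coef u x = (THE a. has_expansion u a x)"

text \<open>Position of index k in the natural greedy ordering rho of x (0-based):
  the number of indices preceding k, i.e. with strictly larger coefficient modulus,
  or equal modulus and smaller index.\<close>
definition greedy_rank :: "(nat \<Rightarrow> nat \<Rightarrow> real) \<Rightarrow> (nat \<Rightarrow> real) \<Rightarrow> nat \<Rightarrow> nat" where
  "greedy_rank u x k = card {j. \<bar>coef u x j\<bar> > \<bar>coef u x k\<bar> \<or>
                               (\<bar>coef u x j\<bar> = \<bar>coef u x k\<bar> \<and> j < k)}"

text \<open>Greedy sum G_n(x) = sum_{j<=n} x^*_{rho(j)}(x) x_{rho(j)}; indices with zero
  coefficient contribute nothing and are omitted.\<close>
definition greedy_sum :: "(nat \<Rightarrow> nat \<Rightarrow> real) \<Rightarrow> (nat \<Rightarrow> real) \<Rightarrow> nat \<Rightarrow> nat \<Rightarrow> real" where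
  "greedy_sum u x n = (\<lambda>i. \<Sum>k\<in>{k. coef u x k \<noteq> 0 \<and> greedy_rank u x k < n}. coef u x k * u k i)"

definition uniformly_quasi_greedy :: "(nat \<Rightarrow> nat \<Rightarrow> real) \<Rightarrow> bool" where
  "uniformly_quasi_greedy u \<longleftrightarrow> (\<exists>C. \<forall>m\<ge>1. \<forall>x\<in>span_E u. l2norm x = 1 \<longrightarrow>
      l2norm (\<lambda>i. Max ((\<lambda>n. \<bar>greedy_sum u x n i\<bar>) ` {1..m})) \<le> C)"

end

theory Submission
  imports Defs
begin

text \<open>Cut \<nat> into consecutive blocks of sizes 2M+2 (M = 0, 1, 2, ...) and let the basis act on the
  M-th block by an orthogonal matrix: the circulant matrix (h(j - k)) of the discrete Hilbert
  transform on the cyclic group of order N = 2M+1, with kernel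
  h(r) = (2/N) (sin (2\<pi> r/N) + sin (4\<pi> r/N) + ... + sin (2M\<pi> r/N)),
  bordered by the normalized constant vector. Block-diagonal orthogonal matrices carry the unit
  vector basis to an orthonormal basis.

  The normalized sum x of the first N basis vectors of block M has norm 1, and at the j-th
  coordinate of the block its (j+1)-st partial sum equals P(j) / \<surd>N, where P(j) = h(0) + ... + h(j).
  One computes P(0) + ... + P(N-1) = cot (\<pi>/N) + ... + cot (M\<pi>/N) \<ge> N (H(M) / \<pi> - 1/2), with
  H(M) the harmonic number, so by Cauchy-Schwarz the maximal function of the partial sums of x has
  norm at least H(M) / \<pi> - 1/2, which is unbounded in M. Hence the basis is not bibasic; and since
  all coefficients of x are equal, its greedy sums are its partial sums, so the basis is not
  uniformly quasi-greedy either.\<close>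

section \<open>Trigonometric sums\<close>

lemma sin_half_mult_sum_cos:
  "2 * sin (a/2) * (\<Sum>j<n. cos (real j * a + \<phi>)) = sin ((real n - 1/2) * a + \<phi>) - sin (\<phi> - a/2)"
proof (induction n)
  case 0
  then show ?case by (simp add: algebra_simps)
next
  case (Suc n)
  have "2 * sin (a/2) * cos (real n * a + \<phi>) = sin (a/2 + (real n * a + \<phi>)) + sin (a/2 - (real n * a + \<phi>))"
    using sin_times_cos[of "a/2" "real n * a + \<phi>"] by simp
  also have "\<dots> = sin ((real (Suc n) - 1/2) * a + \<phi>) - sin ((real n - 1/2) * a + \<phi>)"
  proof -
    have "sin (a/2 - (real n * a + \<phi>)) = - sin ((real n - 1/2) * a + \<phi>)"
    proof -
      have "a/2 - (real n * a + \<phi>) = - ((real n - 1/2) * a + \<phi>)" by (simp add: algebra_simps)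
      then show ?thesis by (simp only: sin_minus)
    qed
    then show ?thesis by (simp add: algebra_simps)
  qed
  finally show ?case using Suc by (simp add: algebra_simps)
qed

lemma sin_half_mult_sum_sin:
  "2 * sin (\<theta>/2) * (\<Sum>r\<le>j. sin (real r * \<theta>)) = cos (\<theta>/2) - cos ((real j + 1/2) * \<theta>)"
proof (induction j)
  case 0
  then show ?case by simp
next
  case (Suc j)
  have "2 * sin (\<theta>/2) * sin (real (Suc j) * \<theta>) = cos (\<theta>/2 - real (Suc j) * \<theta>) - cos (\<theta>/2 + real (Suc j) * \<theta>)"
    using sin_times_sin[of "\<theta>/2" "real (Suc j) * \<theta>"] by simp
  also have "\<dots> = cos ((real j + 1/2) * \<theta>) - cos ((real (Suc j) + 1/2) * \<theta>)"
  proof -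
    have "\<theta>/2 - real (Suc j) * \<theta> = - ((real j + 1/2) * \<theta>)"
      "\<theta>/2 + real (Suc j) * \<theta> = (real (Suc j) + 1/2) * \<theta>"
      by (simp_all add: algebra_simps)
    then show ?thesis by (simp only: cos_minus)
  qed
  finally show ?case using Suc by (simp add: algebra_simps)
qed

lemma sin_pi_mult_div_neq_0:
  assumes "N > 0" "\<not> int N dvd p"
  shows "sin (pi * of_int p / real N) \<noteq> 0"
proof
  assume "sin (pi * of_int p / real N) = 0"
  then obtain i :: int where "pi * of_int p / real N = of_int i * pi"
    using sin_zero_iff_int2 by blast
  then have "real_of_int p = real_of_int (i * int N)" using assms(1) by (simp add: field_simps)
  then have "p = i * int N" by (simp only: of_int_eq_iff)
  then show False using assms(2) by simp
qed

lemma sum_cos_equidistant_eq_0: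
  assumes "N > 0" "\<not> int N dvd p"
  shows "(\<Sum>j<N. cos (2 * pi * of_int p * real j / real N + \<phi>)) = 0"
proof -
  define a where "a = 2 * pi * of_int p / real N"
  have "sin (a/2) \<noteq> 0" using sin_pi_mult_div_neq_0[OF assms] by (simp add: a_def)
  moreover have "sin ((real N - 1/2) * a + \<phi>) = sin (\<phi> - a/2)"
  proof -
    have period: "(real N - 1/2) * a + \<phi> = (\<phi> - a/2) + 2 * pi * of_int p"
      using assms(1) by (simp add: a_def field_simps)
    show ?thesis unfolding period by (simp add: sin_add)
  qed
  ultimately have "(\<Sum>j<N. cos (real j * a + \<phi>)) = 0"
    using sin_half_mult_sum_cos[where a = a and n = N and \<phi> = \<phi>] by simp
  then show ?thesis by (simp add: a_def ac_simps)
qed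

lemma sum_sin_equidistant_eq_0:
  assumes "N > 0" "\<not> int N dvd p"
  shows "(\<Sum>j<N. sin (2 * pi * of_int p * real j / real N + \<phi>)) = 0"
proof -
  have "sin (x + \<phi>) = cos (x + (\<phi> - pi/2))" for x
  proof -
    have "x + (\<phi> - pi/2) = (x + \<phi>) - pi/2" by simp
    then show ?thesis by (simp only: cos_diff) simp
  qed
  then show ?thesis
    using sum_cos_equidistant_eq_0[OF assms, where \<phi> = "\<phi> - pi/2"] by (simp only:)
qed

lemma sum_sin_mult_sin_equidistant:
  assumes "m < M" "m' < M"
  shows "(\<Sum>j<2*M+1. sin (2 * pi * real (Suc m) * (real j + c) / real (2*M+1)) *
                     sin (2 * pi * real (Suc m') * (real j + c') / real (2*M+1)))
       = (if m = m' then real (2*M+1) / 2 * cos (2 * pi * real (Suc m) * (c - c') / real (2*M+1)) else 0)"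
proof -
  define N where "N = 2*M+1"
  have N0: "N > 0" by (simp add: N_def)
  define A where "A j = 2 * pi * real (Suc m) * (real j + c) / real N" for j :: nat
  define B where "B j = 2 * pi * real (Suc m') * (real j + c') / real N" for j :: nat
  have sum_plus: "(\<Sum>j<N. cos (A j + B j)) = 0"
  proof -
    have sum_eq: "A j + B j = 2 * pi * of_int (int (Suc m) + int (Suc m')) * real j / real N
        + (2 * pi * real (Suc m) * c / real N + 2 * pi * real (Suc m') * c' / real N)" for j
      unfolding A_def B_def by (simp add: algebra_simps add_divide_distrib)
    have "\<not> int N dvd (int (Suc m) + int (Suc m'))"
      using assms dvd_imp_le_int[of "int (Suc m) + int (Suc m')" "int N"] by (auto simp: N_def)
    then show ?thesis unfolding sum_eq by (rule sum_cos_equidistant_eq_0[OF N0])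
  qed
  have sum_minus: "(\<Sum>j<N. cos (A j - B j)) =
      (if m = m' then real N * cos (2 * pi * real (Suc m) * (c - c') / real N) else 0)"
  proof (cases "m = m'")
    case True
    then have "A j - B j = 2 * pi * real (Suc m) * (c - c') / real N" for j
      using N0 by (simp add: A_def B_def field_simps)
    then show ?thesis using True by simp
  next
    case False
    have diff_eq: "A j - B j = 2 * pi * of_int (int (Suc m) - int (Suc m')) * real j / real N
        + (2 * pi * real (Suc m) * c / real N - 2 * pi * real (Suc m') * c' / real N)" for j
      unfolding A_def B_def by (simp add: algebra_simps add_divide_distrib diff_divide_distrib)
    have "\<not> int N dvd (int (Suc m) - int (Suc m'))"
      using assms False dvd_imp_le_int[of "int (Suc m) - int (Suc m')" "int N"] by (auto simp: N_def)
    then have "(\<Sum>j<N. cos (A j - B j)) = 0" unfolding diff_eq by (rule sum_cos_equidistant_eq_0[OF N0])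
    with False show ?thesis by simp
  qed
  have "(\<Sum>j<N. sin (A j) * sin (B j)) = ((\<Sum>j<N. cos (A j - B j)) - (\<Sum>j<N. cos (A j + B j))) / 2"
    unfolding sin_times_sin sum_divide_distrib[symmetric] sum_subtractf ..
  also have "\<dots> = (if m = m' then real N / 2 * cos (2 * pi * real (Suc m) * (c - c') / real N) else 0)"
    using sum_plus sum_minus by simp
  finally show ?thesis unfolding A_def B_def N_def .
qed

lemma cot_ge:
  fixes x :: real
  assumes "0 < x" "x \<le> pi/2"
  shows "1/x - x/2 \<le> cot x"
proof -
  have "cos x \<ge> 1 - x^2/2"
  proof -
    have "sin (x/2) ^ 2 \<le> (x/2)^2"
      using assms by (intro power_mono sin_x_le_x sin_ge_zero) auto
    then show ?thesis using cos_double_sin[of "x/2"] by (simp add: power2_eq_square)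
  qed
  have "1/x - x/2 = (1 - x^2/2) / x"
    using assms by (simp add: field_simps power2_eq_square)
  also have "\<dots> \<le> cos x / x"
    using \<open>cos x \<ge> 1 - x^2/2\<close> assms by (intro divide_right_mono) auto
  also have "\<dots> \<le> cos x / sin x"
  proof -
    have "0 < sin x" "sin x \<le> x" "0 \<le> cos x"
      using assms by (auto intro!: sin_gt_zero sin_x_le_x cos_ge_zero)
    then show ?thesis using assms by (intro divide_left_mono) auto
  qed
  finally show ?thesis by (simp add: cot_def)
qed

section \<open>The discrete Hilbert transform\<close>

definition hilbert_kernel :: "nat \<Rightarrow> real \<Rightarrow> real" where
  "hilbert_kernel M r = 2 / real (2*M+1) * (\<Sum>m<M. sin (2 * pi * real (Suc m) * r / real (2*M+1)))"

lemma hilbert_kernel_minus: "hilbert_kernel M (- r) = - hilbert_kernel M r"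
  unfolding hilbert_kernel_def by (simp add: sum_negf)

lemma hilbert_kernel_swap: "hilbert_kernel M (real k - real j) = - hilbert_kernel M (real j - real k)"
  using hilbert_kernel_minus[of M "real j - real k"] by simp

lemma sum_hilbert_kernel_period: "(\<Sum>j<2*M+1. hilbert_kernel M (real j + c)) = 0"
proof -
  define N where "N = 2*M+1"
  have N0: "N > 0" by (simp add: N_def)
  have "(\<Sum>j<N. sin (2 * pi * real (Suc m) * (real j + c) / real N)) = 0" if "m < M" for m
  proof -
    have "\<not> N dvd Suc m"
      using that by (auto simp: N_def dest: dvd_imp_le)
    then have not_dvd: "\<not> int N dvd int (Suc m)" by (simp only: int_dvd_int_iff not_False_eq_True)
    have shift: "2 * pi * real (Suc m) * (real j + c) / real N
        = 2 * pi * of_int (int (Suc m)) * real j / real N + 2 * pi * real (Suc m) * c / real N" for j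
      using N0 by (simp add: field_simps)
    show ?thesis unfolding shift by (rule sum_sin_equidistant_eq_0[OF N0 not_dvd])
  qed
  then have "(\<Sum>m<M. \<Sum>j<N. sin (2 * pi * real (Suc m) * (real j + c) / real N)) = 0"
    by simp
  then show ?thesis
    unfolding hilbert_kernel_def N_def[symmetric]
    by (simp add: sum.swap[of _ "{..<N}"] sum_divide_distrib[symmetric] sum_distrib_left[symmetric])
qed

lemma sum_hilbert_kernel_mult:
  "(\<Sum>j<2*M+1. hilbert_kernel M (real j + c) * hilbert_kernel M (real j + c')) =
     2 / real (2*M+1) * (\<Sum>m<M. cos (2 * pi * real (Suc m) * (c - c') / real (2*M+1)))"
proof -
  define N where "N = 2*M+1"
  define S where "S m x = sin (2 * pi * real (Suc m) * x / real N)" for m x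
  have N0: "real N > 0" by (simp add: N_def)
  have "hilbert_kernel M x * hilbert_kernel M y = (2 / real N)^2 * (\<Sum>m<M. \<Sum>m'<M. S m x * S m' y)" for x y
    unfolding hilbert_kernel_def S_def N_def by (simp add: sum_product power2_eq_square)
  then have "(\<Sum>j<N. hilbert_kernel M (real j + c) * hilbert_kernel M (real j + c')) =
      (2 / real N)^2 * (\<Sum>m<M. \<Sum>m'<M. \<Sum>j<N. S m (real j + c) * S m' (real j + c'))"
    by (simp add: sum_distrib_left sum.swap[of _ "{..<N}"])
  also have "\<dots> = (2 / real N)^2 * (\<Sum>m<M. real N / 2 * cos (2 * pi * real (Suc m) * (c - c') / real N))"
    using sum_sin_mult_sin_equidistant unfolding S_def N_def
    by (intro arg_cong2[where f="(*)"] sum.cong) (auto simp: sum.delta)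
  also have "\<dots> = (2 / real N)^2 * (real N / 2 * (\<Sum>m<M. cos (2 * pi * real (Suc m) * (c - c') / real N)))"
    by (simp only: sum_distrib_left)
  also have "\<dots> = 2 / real N * (\<Sum>m<M. cos (2 * pi * real (Suc m) * (c - c') / real N))"
  proof -
    have "(2 / real N)^2 * (real N / 2 * X) = 2 / real N * X" for X
      using N0 by (simp add: power2_eq_square field_simps)
    then show ?thesis by blast
  qed
  finally show ?thesis unfolding N_def .
qed

lemma Dirichlet_kernel_at_roots_of_unity:
  fixes d :: int
  assumes "\<bar>d\<bar> < int (2*M+1)"
  shows "1 + 2 * (\<Sum>m<M. cos (2 * pi * real (Suc m) * of_int d / real (2*M+1))) =
    (if d = 0 then real (2*M+1) else 0)"
proof (cases "d = 0")
  case False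
  define N where "N = 2*M+1"
  have N0: "N > 0" by (simp add: N_def)
  have "\<not> int N dvd d"
    using assms False dvd_imp_le_int[of d "int N"] by (auto simp: N_def)
  define \<theta> where "\<theta> = 2 * pi * of_int d / real N"
  have "sin (\<theta>/2) \<noteq> 0" using sin_pi_mult_div_neq_0[OF N0 \<open>\<not> int N dvd d\<close>] by (simp add: \<theta>_def)
  moreover have "sin ((real M - 1/2) * \<theta> + \<theta>) = 0"
  proof -
    have "(real M - 1/2) * \<theta> + \<theta> = (2 * real M + 1) / 2 * \<theta>"
      by (simp add: algebra_simps)
    also have "\<dots> = of_int d * pi"
      unfolding \<theta>_def N_def by (simp add: field_simps add_pos_nonneg)
    finally have "(real M - 1/2) * \<theta> + \<theta> = of_int d * pi" .
    then show ?thesis by (simp add: sin_zero_iff_int2)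
  qed
  moreover have "2 * sin (\<theta>/2) * (\<Sum>m<M. cos (real m * \<theta> + \<theta>)) =
      sin ((real M - 1/2) * \<theta> + \<theta>) - sin (\<theta>/2)"
    using sin_half_mult_sum_cos[where a = \<theta> and n = M and \<phi> = \<theta>] by simp
  ultimately have "sin (\<theta>/2) * (2 * (\<Sum>m<M. cos (real m * \<theta> + \<theta>)) + 1) = 0"
    by (simp add: algebra_simps)
  with \<open>sin (\<theta>/2) \<noteq> 0\<close> have "2 * (\<Sum>m<M. cos (real m * \<theta> + \<theta>)) + 1 = 0"
    by simp
  moreover have "cos (2 * pi * real (Suc m) * of_int d / real N) = cos (real m * \<theta> + \<theta>)" for m
    using N0 by (simp add: \<theta>_def field_simps)
  ultimately show ?thesis using False by (simp add: N_def)
qed simp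

lemma hilbert_kernel_gram:
  assumes "k < 2*M+1" "l < 2*M+1"
  shows "(\<Sum>i<2*M+1. hilbert_kernel M (real i - real k) * hilbert_kernel M (real i - real l)) =
    (if k = l then 1 else 0) - 1 / real (2*M+1)"
proof -
  have "(\<Sum>i<2*M+1. hilbert_kernel M (real i - real k) * hilbert_kernel M (real i - real l)) =
      2 / real (2*M+1) * (\<Sum>m<M. cos (2 * pi * real (Suc m) * of_int (int l - int k) / real (2*M+1)))"
    using sum_hilbert_kernel_mult[of M "- real k" "- real l"] by simp
  also have "\<dots> = (if int l - int k = 0 then 1 else 0) - 1 / real (2*M+1)"
    using Dirichlet_kernel_at_roots_of_unity[of "int l - int k" M] assms by (simp add: field_simps)
  finally show ?thesis by auto
qed

definition bordered :: "nat \<Rightarrow> (nat \<Rightarrow> nat \<Rightarrow> real) \<Rightarrow> nat \<Rightarrow> nat \<Rightarrow> real" where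
  "bordered N A j k =
    (if j < N \<and> k < N then A j k else if j < N \<or> k < N then 1 / sqrt (real N) else 0)"

lemma bordered_transpose: "bordered N A k j = bordered N (\<lambda>j k. A k j) j k"
  unfolding bordered_def by auto

lemma bordered_orthonormal_columns:
  assumes "N > 0"
    and col_sum: "\<And>k. k < N \<Longrightarrow> (\<Sum>j<N. A j k) = 0"
    and gram: "\<And>k l. k < N \<Longrightarrow> l < N \<Longrightarrow> (\<Sum>j<N. A j k * A j l) = (if k = l then 1 else 0) - 1 / real N"
    and "k < Suc N" "l < Suc N"
  shows "(\<Sum>j<Suc N. bordered N A j k * bordered N A j l) = (if k = l then 1 else 0)"
proof -
  have sqrt_sq: "sqrt (real N) * sqrt (real N) = real N" by simp
  have "(\<Sum>j<Suc N. bordered N A j k * bordered N A j l) =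
      (\<Sum>j<N. bordered N A j k * bordered N A j l) + bordered N A N k * bordered N A N l"
    by simp
  also have "\<dots> = (if k = l then 1 else 0)"
  proof (cases "k < N"; cases "l < N")
    assume "k < N" "l < N"
    then show ?thesis using gram[of k l] by (simp add: bordered_def sqrt_sq)
  next
    assume "k < N" "\<not> l < N"
    then show ?thesis using col_sum[of k] by (simp add: bordered_def sum_divide_distrib[symmetric])
  next
    assume "\<not> k < N" "l < N"
    then show ?thesis using col_sum[of l] by (simp add: bordered_def sum_divide_distrib[symmetric])
  next
    assume "\<not> k < N" "\<not> l < N"
    then show ?thesis using assms by (simp add: bordered_def sqrt_sq)
  qed
  finally show ?thesis .
qed

text \<open>The circulant matrix (h (j - k)) of the discrete Hilbert transform is orthogonal on the
  vectors of mean zero (Gram matrix I - J/N), so bordering it by the normalized constant vector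
  yields an orthogonal matrix.\<close>
definition hilbert_block :: "nat \<Rightarrow> nat \<Rightarrow> nat \<Rightarrow> real" where
  "hilbert_block M = bordered (2*M+1) (\<lambda>j k. hilbert_kernel M (real j - real k))"

lemma hilbert_block_orthonormal_columns:
  assumes "k < 2*M+2" "l < 2*M+2"
  shows "(\<Sum>j<2*M+2. hilbert_block M j k * hilbert_block M j l) = (if k = l then 1 else 0)"
proof -
  have "(\<Sum>j<2*M+1. hilbert_kernel M (real j - real k)) = 0" for k
    using sum_hilbert_kernel_period[of M "- real k"] by simp
  then have "(\<Sum>j<Suc (2*M+1). hilbert_block M j k * hilbert_block M j l) = (if k = l then 1 else 0)"
    unfolding hilbert_block_def using assms hilbert_kernel_gram
    by (intro bordered_orthonormal_columns) auto
  then show ?thesis by (simp only: Suc_eq_plus1 add.assoc one_add_one)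
qed

lemma hilbert_block_orthonormal_rows:
  assumes "j < 2*M+2" "j' < 2*M+2"
  shows "(\<Sum>k<2*M+2. hilbert_block M j k * hilbert_block M j' k) = (if j = j' then 1 else 0)"
proof -
  define A where "A j k = hilbert_kernel M (real k - real j)" for j k
  have "(\<Sum>j<2*M+1. A j k) = 0" for k
  proof -
    have "(\<Sum>j<2*M+1. A j k) = - (\<Sum>j<2*M+1. hilbert_kernel M (real j + - real k))"
      unfolding A_def sum_negf[symmetric] by (intro sum.cong refl) (simp add: hilbert_kernel_swap[of M k])
    then show ?thesis by (simp only: sum_hilbert_kernel_period neg_0_equal_iff_equal)
  qed
  moreover have "(\<Sum>i<2*M+1. A i k * A i l) = (if k = l then 1 else 0) - 1 / real (2*M+1)"
    if "k < 2*M+1" "l < 2*M+1" for k l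
  proof -
    have "A i k * A i l = hilbert_kernel M (real i - real k) * hilbert_kernel M (real i - real l)" for i
      using hilbert_kernel_swap[of M k i] hilbert_kernel_swap[of M l i] by (simp add: A_def)
    then show ?thesis using hilbert_kernel_gram[OF that] by simp
  qed
  ultimately have "(\<Sum>k<Suc (2*M+1). bordered (2*M+1) A k j * bordered (2*M+1) A k j') = (if j = j' then 1 else 0)"
    using assms by (intro bordered_orthonormal_columns) auto
  then show ?thesis
    unfolding hilbert_block_def bordered_transpose[of _ _ j] bordered_transpose[of _ _ j'] A_def
    by (simp only: Suc_eq_plus1 add.assoc one_add_one)
qed

section \<open>Partial sums of the Hilbert kernel\<close>

lemma sum_sum_sin_equidistant:
  assumes "m < M"
  shows "(\<Sum>j<2*M+1. \<Sum>r\<le>j. sin (real r * (2 * pi * real (Suc m) / real (2*M+1))))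
     = real (2*M+1) / 2 * cot (pi * real (Suc m) / real (2*M+1))"
proof -
  define N where "N = 2*M+1"
  have N0: "N > 0" by (simp add: N_def)
  define \<theta> where "\<theta> = 2 * pi * real (Suc m) / real N"
  have "\<not> N dvd Suc m"
    using assms by (auto simp: N_def dest: dvd_imp_le)
  then have not_dvd: "\<not> int N dvd int (Suc m)" by (simp only: int_dvd_int_iff not_False_eq_True)
  have "sin (\<theta>/2) \<noteq> 0" using sin_pi_mult_div_neq_0[OF N0 not_dvd] by (simp add: \<theta>_def)
  have shift: "(real j + 1/2) * \<theta> = 2 * pi * of_int (int (Suc m)) * real j / real N + \<theta>/2" for j
    unfolding \<theta>_def using N0 by (simp add: field_simps)
  have "2 * sin (\<theta>/2) * (\<Sum>j<N. \<Sum>r\<le>j. sin (real r * \<theta>)) =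
      (\<Sum>j<N. 2 * sin (\<theta>/2) * (\<Sum>r\<le>j. sin (real r * \<theta>)))"
    by (rule sum_distrib_left)
  also have "\<dots> = (\<Sum>j<N. cos (\<theta>/2) - cos ((real j + 1/2) * \<theta>))"
    by (simp only: sin_half_mult_sum_sin)
  also have "\<dots> = real N * cos (\<theta>/2)"
    unfolding sum_subtractf shift sum_cos_equidistant_eq_0[OF N0 not_dvd] by simp
  finally have "(\<Sum>j<N. \<Sum>r\<le>j. sin (real r * \<theta>)) = real N / 2 * cot (\<theta>/2)"
    using \<open>sin (\<theta>/2) \<noteq> 0\<close> by (simp add: cot_def field_simps)
  moreover have "\<theta>/2 = pi * real (Suc m) / real N" by (simp add: \<theta>_def)
  ultimately show ?thesis unfolding \<theta>_def N_def by simp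
qed

definition hilbert_partial_sum :: "nat \<Rightarrow> nat \<Rightarrow> real" where
  "hilbert_partial_sum M j = (\<Sum>r\<le>j. hilbert_kernel M (real r))"

lemma sum_hilbert_partial_sums:
  "(\<Sum>j<2*M+1. hilbert_partial_sum M j) = (\<Sum>m<M. cot (pi * real (Suc m) / real (2*M+1)))"
proof -
  define N where "N = 2*M+1"
  have N0: "real N > 0" by (simp add: N_def)
  have "(\<Sum>j<N. hilbert_partial_sum M j) =
      (\<Sum>j<N. \<Sum>r\<le>j. 2 / real N * (\<Sum>m<M. sin (real r * (2 * pi * real (Suc m) / real N))))"
    unfolding hilbert_partial_sum_def hilbert_kernel_def N_def[symmetric]
    by (intro sum.cong refl) (simp add: algebra_simps)
  also have "\<dots> = 2 / real N * (\<Sum>j<N. \<Sum>m<M. \<Sum>r\<le>j. sin (real r * (2 * pi * real (Suc m) / real N)))"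
    by (simp only: sum_distrib_left sum.swap[of _ "{.._}"])
  also have "\<dots> = 2 / real N * (\<Sum>m<M. \<Sum>j<N. \<Sum>r\<le>j. sin (real r * (2 * pi * real (Suc m) / real N)))"
    by (simp only: sum.swap[of _ "{..<N}"])
  also have "\<dots> = 2 / real N * (\<Sum>m<M. real N / 2 * cot (pi * real (Suc m) / real N))"
    using sum_sum_sin_equidistant unfolding N_def by (intro arg_cong2[where f="(*)"] sum.cong) auto
  also have "\<dots> = (\<Sum>m<M. cot (pi * real (Suc m) / real N))"
    using N0 by (simp add: sum_distrib_left)
  finally show ?thesis unfolding N_def .
qed

lemma sum_hilbert_partial_sums_ge:
  "real (2*M+1) * (harm M / pi - 1/2) \<le> (\<Sum>j<2*M+1. hilbert_partial_sum M j)"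
proof -
  define N where "N = 2*M+1"
  have N0: "real N > 0" by (simp add: N_def)
  have cot_bound: "real N / (pi * real (Suc m)) - 1 \<le> cot (pi * real (Suc m) / real N)"
    if "m < M" for m
  proof -
    define x where "x = pi * real (Suc m) / real N"
    have "0 < x" using N0 by (simp add: x_def)
    moreover have "x \<le> pi/2"
    proof -
      have "pi * (real (Suc m) * 2) \<le> pi * real N" using that by (simp add: N_def)
      then show ?thesis unfolding x_def using N0 by (simp add: field_simps)
    qed
    ultimately have "1/x - x/2 \<le> cot x" by (rule cot_ge)
    moreover have "x/2 \<le> 1" using \<open>x \<le> pi/2\<close> pi_less_4 by simp
    ultimately show ?thesis by (simp add: x_def)
  qed
  have "real N * (harm M / pi - 1/2) = real N / pi * harm M - real N / 2"
    by (simp add: field_simps)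
  also have "\<dots> \<le> real N / pi * harm M - real M"
    by (simp add: N_def)
  also have "\<dots> = (\<Sum>m<M. real N / (pi * real (Suc m)) - 1)"
    by (simp add: harm_altdef sum_subtractf sum_distrib_left field_simps)
  also have "\<dots> \<le> (\<Sum>m<M. cot (pi * real (Suc m) / real N))"
    using cot_bound by (intro sum_mono) auto
  also have "\<dots> = (\<Sum>j<N. hilbert_partial_sum M j)"
    unfolding N_def by (rule sum_hilbert_partial_sums[symmetric])
  finally show ?thesis unfolding N_def .
qed

lemma hilbert_partial_sums_norm_ge:
  "harm M / pi - 1/2 \<le> sqrt (\<Sum>j<2*M+1. (hilbert_partial_sum M j / sqrt (real (2*M+1)))^2)"
proof (cases "harm M / pi - 1/2 \<ge> 0")
  case True
  define N where "N = 2*M+1"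
  have N0: "real N > 0" by (simp add: N_def)
  have "(real N * (harm M / pi - 1/2))^2 \<le> (\<Sum>j<N. hilbert_partial_sum M j)^2"
    using sum_hilbert_partial_sums_ge[of M] True N0 unfolding N_def by (intro power_mono) auto
  also have "\<dots> \<le> real N * (\<Sum>j<N. (hilbert_partial_sum M j)^2)"
    using sum_squared_le_sum_of_squares[of "hilbert_partial_sum M" "{..<N}"] by (simp add: mult.commute)
  finally have "real N * (real N * (harm M / pi - 1/2)^2) \<le> real N * (\<Sum>j<N. (hilbert_partial_sum M j)^2)"
    by (simp add: power_mult_distrib power2_eq_square algebra_simps)
  then have "real N * (harm M / pi - 1/2)^2 \<le> (\<Sum>j<N. (hilbert_partial_sum M j)^2)"
    using N0 by (rule mult_left_le_imp_le)
  then have "(harm M / pi - 1/2)^2 \<le> (\<Sum>j<N. (hilbert_partial_sum M j)^2) / real N"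
    using N0 by (simp add: pos_le_divide_eq mult.commute)
  also have "\<dots> = (\<Sum>j<N. (hilbert_partial_sum M j / sqrt (real N))^2)"
    using N0 by (simp add: power_divide sum_divide_distrib)
  finally show ?thesis unfolding N_def using True by (simp add: real_le_rsqrt)
next
  case False
  have "0 \<le> sqrt (\<Sum>j<2*M+1. (hilbert_partial_sum M j / sqrt (real (2*M+1)))^2)"
    by (intro real_sqrt_ge_zero sum_nonneg) auto
  with False show ?thesis by linarith
qed

lemma harm_div_pi_unbounded: "\<exists>b. C < harm b / pi - 1/2"
proof -
  obtain b where "pi * (\<bar>C\<bar> + 1) \<le> (harm b :: real)"
    using harm_at_top unfolding filterlim_at_top eventually_sequentially by blast
  then have "\<bar>C\<bar> + 1 \<le> harm b / pi" by (simp add: field_simps)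
  then show ?thesis by (intro exI[of _ b]) linarith
qed

section \<open>Expansions, maximal functions and greedy sums in \<open>\<ell>\<^sub>2\<close>\<close>

lemma l2inner_finite_support:
  assumes "finite A" "\<And>i. i \<notin> A \<Longrightarrow> f i * g i = 0"
  shows "l2inner f g = (\<Sum>i\<in>A. f i * g i)"
  unfolding l2inner_def by (rule suminf_finite) (use assms in auto)

lemma lpsum_split:
  "m \<le> n \<Longrightarrow> lpsum v a n i = lpsum v a m i + (\<Sum>k\<in>{m..<n}. a k * v k i)"
  unfolding lpsum_def by (metis sum.atLeastLessThan_concat zero_le lessThan_atLeast0)

lemma sum_sq_lpsum_orthonormal:
  assumes support: "\<And>k i. v k i \<noteq> 0 \<Longrightarrow> i < F k"
    and orthonormal: "\<And>k l. l2inner (v k) (v l) = (if k = l then 1 else 0)"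
  shows "(\<Sum>i. (lpsum v a n i)^2) = (\<Sum>k<n. (a k)^2)"
proof -
  define B where "B = (\<Sum>k<n. F k)"
  have vanish: "v k i = 0" if "k < n" "B \<le> i" for k i
  proof -
    have "F k \<le> B" unfolding B_def using that(1) by (intro member_le_sum) auto
    then show ?thesis using support[of k i] that(2) by linarith
  qed
  have inner: "(\<Sum>i<B. v k i * v l i) = (if k = l then 1 else 0)" if "k < n" "l < n" for k l
    using orthonormal[of k l] l2inner_finite_support[of "{..<B}" "v k" "v l"] vanish that by auto
  have "(\<Sum>i. (lpsum v a n i)^2) = (\<Sum>i<B. (lpsum v a n i)^2)"
    by (rule suminf_finite) (auto simp: lpsum_def vanish)
  also have "\<dots> = (\<Sum>i<B. \<Sum>k<n. \<Sum>l<n. a k * a l * (v k i * v l i))"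
    unfolding lpsum_def power2_eq_square sum_product by (simp only: mult_ac)
  also have "\<dots> = (\<Sum>k<n. \<Sum>l<n. a k * a l * (\<Sum>i<B. v k i * v l i))"
    by (simp only: sum_distrib_left sum.swap[of _ "{..<B}"])
  also have "\<dots> = (\<Sum>k<n. (a k)^2)"
    by (simp add: inner power2_eq_square if_distrib sum.delta cong: if_cong)
  finally show ?thesis .
qed

lemma l2norm_lpsum_orthonormal:
  assumes "\<And>k i. v k i \<noteq> 0 \<Longrightarrow> i < F k"
    and "\<And>k l. l2inner (v k) (v l) = (if k = l then 1 else 0)"
  shows "l2norm (lpsum v a n) = sqrt (\<Sum>k<n. (a k)^2)"
  using sum_sq_lpsum_orthonormal[OF assms] by (simp add: l2norm_def)

lemma l2norm_lpsum_canon: "l2norm (lpsum canon a n) = sqrt (\<Sum>k<n. (a k)^2)"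
proof (rule l2norm_lpsum_orthonormal[of canon Suc])
  show "canon k i \<noteq> 0 \<Longrightarrow> i < Suc k" for k i by (simp add: canon_def split: if_splits)
  show "l2inner (canon k) (canon l) = (if k = l then 1 else 0)" for k l
    using l2inner_finite_support[of "{l}" "canon k" "canon l"] by (simp add: canon_def)
qed

lemma summable_sq_diff:
  fixes f g :: "nat \<Rightarrow> real"
  assumes "summable (\<lambda>i. (f i)^2)" "summable (\<lambda>i. (g i)^2)"
  shows "summable (\<lambda>i. (f i - g i)^2)"
proof (rule summable_comparison_test[where g="\<lambda>i. 2 * (f i)^2 + 2 * (g i)^2"])
  have "(p - q)^2 \<le> 2 * p^2 + 2 * q^2" for p q :: real
    using zero_le_power2[of "p + q"] by (simp add: power2_eq_square algebra_simps)
  then show "\<exists>N. \<forall>n\<ge>N. norm ((f n - g n)^2) \<le> 2 * (f n)^2 + 2 * (g n)^2" by auto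
  show "summable (\<lambda>i. 2 * (f i)^2 + 2 * (g i)^2)" using assms by (intro summable_add summable_mult)
qed

lemma suminf_sq_diff_le:
  fixes f g :: "nat \<Rightarrow> real"
  assumes "summable (\<lambda>i. (f i)^2)" "summable (\<lambda>i. (g i)^2)"
  shows "(\<Sum>i. (f i - g i)^2) \<le> 2 * (\<Sum>i. (f i)^2) + 2 * (\<Sum>i. (g i)^2)"
proof -
  have "(\<Sum>i. (f i - g i)^2) \<le> (\<Sum>i. 2 * (f i)^2 + 2 * (g i)^2)"
  proof (rule suminf_le)
    show "(f i - g i)^2 \<le> 2 * (f i)^2 + 2 * (g i)^2" for i
      using zero_le_power2[of "f i + g i"] by (simp add: power2_eq_square algebra_simps)
  qed (use summable_sq_diff[OF assms] assms in \<open>auto intro!: summable_add summable_mult\<close>)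
  also have "\<dots> = 2 * (\<Sum>i. (f i)^2) + 2 * (\<Sum>i. (g i)^2)"
    using assms by (simp add: suminf_add[symmetric] suminf_mult summable_mult)
  finally show ?thesis .
qed

lemma coef_eqI:
  assumes "is_basis_l2 u" "x \<in> l2" "has_expansion u a x"
  shows "coef u x = a"
  using assms unfolding is_basis_l2_def coef_def by (metis the1_equality)

lemma has_expansion_lpsum:
  assumes "\<And>k. n \<le> k \<Longrightarrow> a k = 0"
  shows "has_expansion u a (lpsum u a n)"
  unfolding has_expansion_def
proof (rule tendsto_eventually, unfold eventually_sequentially, intro exI allI impI)
  fix m assume "n \<le> m"
  then have "lpsum u a m = lpsum u a n"
    using lpsum_split[of n m u a] assms by (auto intro!: sum.neutral)
  then show "l2norm (\<lambda>i. lpsum u a m i - lpsum u a n i) = 0" by (simp add: l2norm_def)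
qed

lemma l2norm_Max_abs_ge:
  fixes F :: "'a \<Rightarrow> nat \<Rightarrow> real"
  assumes "finite S" "S \<noteq> {}" "finite A"
    and vanish: "\<And>n i. n \<in> S \<Longrightarrow> i \<notin> A \<Longrightarrow> F n i = 0"
    and "I \<subseteq> A" and dominated: "\<And>i. i \<in> I \<Longrightarrow> \<exists>n\<in>S. \<bar>w i\<bar> \<le> \<bar>F n i\<bar>"
  shows "sqrt (\<Sum>i\<in>I. (w i)^2) \<le> l2norm (\<lambda>i. Max ((\<lambda>n. \<bar>F n i\<bar>) ` S))"
proof -
  define f where "f i = Max ((\<lambda>n. \<bar>F n i\<bar>) ` S)" for i
  have F_le: "\<bar>F n i\<bar> \<le> f i" if "n \<in> S" for n i
    unfolding f_def using assms(1) that by (intro Max_ge) auto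
  have f_vanish: "f i = 0" if "i \<notin> A" for i
  proof -
    have "(\<lambda>n. \<bar>F n i\<bar>) ` S = {0}" using vanish that assms(2) by auto
    then show ?thesis by (simp add: f_def)
  qed
  have "(\<Sum>i\<in>I. (w i)^2) \<le> (\<Sum>i\<in>I. (f i)^2)"
  proof (rule sum_mono)
    fix i assume "i \<in> I"
    then obtain n where "n \<in> S" "\<bar>w i\<bar> \<le> \<bar>F n i\<bar>" using dominated by blast
    then have "\<bar>w i\<bar> \<le> \<bar>f i\<bar>" using F_le[of n i] by linarith
    then show "(w i)^2 \<le> (f i)^2" by (simp add: abs_le_square_iff)
  qed
  also have "\<dots> \<le> (\<Sum>i\<in>A. (f i)^2)"
    using assms(3,5) by (intro sum_mono2) auto
  also have "\<dots> = (\<Sum>i. (f i)^2)"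
    by (rule suminf_finite[symmetric]) (use assms(3) f_vanish in auto)
  finally show ?thesis unfolding l2norm_def f_def by (rule real_sqrt_le_mono)
qed

lemma greedy_sum_flat:
  assumes coef: "\<And>k. coef u x k = (if s \<le> k \<and> k < s + N then c else 0)"
    and "c \<noteq> 0" "n \<le> N"
  shows "greedy_sum u x n = (\<lambda>i. \<Sum>k\<in>{s..<s+n}. c * u k i)"
proof -
  have rank: "greedy_rank u x k = k - s" if "s \<le> k" "k < s + N" for k
  proof -
    have "{j. \<bar>coef u x j\<bar> > \<bar>coef u x k\<bar> \<or> (\<bar>coef u x j\<bar> = \<bar>coef u x k\<bar> \<and> j < k)} = {s..<k}"
      using that \<open>c \<noteq> 0\<close> by (auto simp: coef)
    then show ?thesis unfolding greedy_rank_def by simp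
  qed
  have support: "{k. coef u x k \<noteq> 0 \<and> greedy_rank u x k < n} = {s..<s+n}"
    using \<open>n \<le> N\<close> \<open>c \<noteq> 0\<close> by (auto simp: coef rank)
  show ?thesis
    unfolding greedy_sum_def support using \<open>n \<le> N\<close> by (intro ext sum.cong refl) (simp add: coef)
qed

section \<open>Block-diagonal orthogonal bases\<close>

text \<open>Orthonormality of the rows is implied by that of the columns (the matrices are square);
  it is assumed separately to avoid developing that piece of linear algebra.\<close>
locale orthogonal_blocks =
  fixes d :: "nat \<Rightarrow> nat" and Q :: "nat \<Rightarrow> nat \<Rightarrow> nat \<Rightarrow> real"
  assumes size_pos: "0 < d b"
    and orthonormal_columns:
      "k < d b \<Longrightarrow> l < d b \<Longrightarrow> (\<Sum>i<d b. Q b i k * Q b i l) = (if k = l then 1 else 0)"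
    and orthonormal_rows:
      "i < d b \<Longrightarrow> i' < d b \<Longrightarrow> (\<Sum>k<d b. Q b i k * Q b i' k) = (if i = i' then 1 else 0)"
begin

definition start :: "nat \<Rightarrow> nat" where
  "start b = (\<Sum>c<b. d c)"

definition block :: "nat \<Rightarrow> nat" where
  "block k = (LEAST b. k < start (Suc b))"

definition block_set :: "nat \<Rightarrow> nat set" where
  "block_set b = {start b..<start (Suc b)}"

definition basis_vec :: "nat \<Rightarrow> nat \<Rightarrow> real" where
  "basis_vec k i = (if block i = block k then Q (block k) (i - start (block k)) (k - start (block k)) else 0)"

definition block_coeff :: "(nat \<Rightarrow> real) \<Rightarrow> nat \<Rightarrow> real" where
  "block_coeff x k = (\<Sum>i\<in>block_set (block k). x i * basis_vec k i)"

lemma start_Suc [simp]: "start (Suc b) = start b + d b"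
  by (simp add: start_def)

lemma finite_block_set [simp]: "finite (block_set b)"
  by (simp add: block_set_def)

lemma start_mono: "b \<le> c \<Longrightarrow> start b \<le> start c"
  unfolding start_def by (rule sum_mono2) auto

lemma start_ge: "b \<le> start b"
proof -
  have "(\<Sum>c<b. 1) \<le> start b"
    unfolding start_def using size_pos by (intro sum_mono) (simp add: Suc_le_eq)
  then show ?thesis by simp
qed

lemma block_ub: "k < start (Suc (block k))"
proof -
  have "k < start (Suc k)" using start_ge[of "Suc k"] by simp
  then show ?thesis unfolding block_def by (rule LeastI)
qed

lemma block_lb: "start (block k) \<le> k"
proof (cases "block k")
  case (Suc c)
  then have "\<not> k < start (Suc c)" unfolding block_def by (metis lessI not_less_Least)
  then show ?thesis using Suc by simp
qed (simp add: start_def)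

lemma block_eqI:
  assumes "start b \<le> k" "k < start (Suc b)"
  shows "block k = b"
proof (rule ccontr)
  assume "block k \<noteq> b"
  then consider "block k < b" | "b < block k" by linarith
  then show False
  proof cases
    case 1
    then have "start (Suc (block k)) \<le> start b" by (intro start_mono) simp
    then show False using block_ub[of k] assms by simp
  next
    case 2
    then have "start (Suc b) \<le> start (block k)" by (intro start_mono) simp
    then show False using block_lb[of k] assms by simp
  qed
qed

lemma block_iff: "block k = b \<longleftrightarrow> k \<in> block_set b"
  using block_eqI block_lb block_ub unfolding block_set_def by auto

lemma block_mono: "k \<le> k' \<Longrightarrow> block k \<le> block k'"
  using block_ub[of k'] block_lb[of k] start_mono[of "Suc (block k')" "block k"] by fastforce

lemma block_set_subset: "k < start b \<Longrightarrow> block_set (block k) \<subseteq> {..<start b}"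
proof -
  assume "k < start b"
  then have "block k < b"
    using block_lb[of k] start_mono[of b "block k"] by linarith
  then have "start (Suc (block k)) \<le> start b" by (intro start_mono) simp
  then show ?thesis unfolding block_set_def by auto
qed

lemma block_offset:
  assumes "block k = b"
  obtains s where "s < d b" "k = start b + s"
proof
  show "k - start b < d b" "k = start b + (k - start b)"
    using assms block_lb[of k] block_ub[of k] by auto
qed

lemma sum_block_set: "(\<Sum>i\<in>block_set b. f i) = (\<Sum>r<d b. f (start b + r))"
proof -
  have "block_set b = {0 + start b..<d b + start b}" by (simp add: block_set_def add.commute)
  then have "(\<Sum>i\<in>block_set b. f i) = (\<Sum>r\<in>{0..<d b}. f (r + start b))"
    by (simp only: sum.shift_bounds_nat_ivl)
  then show ?thesis by (simp add: atLeast0LessThan add.commute)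
qed

lemma basis_vec_nonzero_imp_block: "basis_vec k i \<noteq> 0 \<Longrightarrow> block i = block k"
  unfolding basis_vec_def by (auto split: if_splits)

lemma basis_vec_start_add:
  assumes "r < d b" "s < d b"
  shows "basis_vec (start b + s) (start b + r) = Q b r s"
proof -
  have "block (start b + r) = b" "block (start b + s) = b"
    using assms by (auto intro: block_eqI)
  then show ?thesis by (simp add: basis_vec_def)
qed

lemma sum_block_set_basis_vec_orthonormal:
  "(\<Sum>i\<in>block_set (block k). basis_vec l i * basis_vec k i) = (if l = k then 1 else 0)"
proof (cases "block l = block k")
  case True
  define b where "b = block k"
  obtain s t where st: "s < d b" "l = start b + s" "t < d b" "k = start b + t"
    using block_offset True b_def by metis
  have "(\<Sum>i\<in>block_set b. basis_vec (start b + s) i * basis_vec (start b + t) i) = (if s = t then 1 else 0)"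
    using orthonormal_columns[of s b t] st by (simp add: sum_block_set basis_vec_start_add)
  then show ?thesis using st unfolding b_def[symmetric] by simp
next
  case False
  then have "basis_vec l i = 0" if "i \<in> block_set (block k)" for i
    using that block_iff basis_vec_nonzero_imp_block by metis
  then show ?thesis using False by auto
qed

lemma sum_block_set_basis_vec_complete:
  "(\<Sum>k\<in>block_set (block i). basis_vec k i * basis_vec k i') = (if i = i' then 1 else 0)"
proof (cases "block i' = block i")
  case True
  define b where "b = block i"
  obtain r r' where rr: "r < d b" "i = start b + r" "r' < d b" "i' = start b + r'"
    using block_offset True b_def by metis
  have "(\<Sum>k\<in>block_set b. basis_vec k (start b + r) * basis_vec k (start b + r')) = (if r = r' then 1 else 0)"
    using orthonormal_rows[of r b r'] rr by (simp add: sum_block_set basis_vec_start_add)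
  then show ?thesis using rr unfolding b_def[symmetric] by simp
next
  case False
  then have "basis_vec k i' = 0" if "k \<in> block_set (block i)" for k
    using that block_iff basis_vec_nonzero_imp_block by metis
  then show ?thesis using False by auto
qed

lemma basis_vec_support: "basis_vec k i \<noteq> 0 \<Longrightarrow> i < start (Suc (block k))"
  using basis_vec_nonzero_imp_block block_ub by metis

lemma l2inner_basis_vec: "l2inner (basis_vec k) (basis_vec l) = (if k = l then 1 else 0)"
proof -
  have "l2inner (basis_vec k) (basis_vec l) = (\<Sum>i\<in>block_set (block l). basis_vec k i * basis_vec l i)"
    by (rule l2inner_finite_support) (auto simp: block_iff[symmetric] dest: basis_vec_nonzero_imp_block)
  then show ?thesis by (simp only: sum_block_set_basis_vec_orthonormal)
qed

lemma basis_vec_in_l2: "basis_vec k \<in> l2"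
  unfolding l2_def by (auto intro!: summable_finite[of "{..<start (Suc (block k))}"] dest: basis_vec_support[simplified])

lemma l2norm_lpsum_basis_vec: "l2norm (lpsum basis_vec a n) = sqrt (\<Sum>k<n. (a k)^2)"
  using l2norm_lpsum_orthonormal[OF basis_vec_support l2inner_basis_vec] .

lemma isometrically_equivalent_canon: "isometrically_equivalent basis_vec canon"
  unfolding isometrically_equivalent_def l2norm_lpsum_basis_vec l2norm_lpsum_canon by simp

lemma sum_basis_vec_complete_below_start:
  assumes "i < start b"
  shows "(\<Sum>k<start b. basis_vec k i * basis_vec k i') = (if i = i' then 1 else 0)"
proof -
  have "basis_vec k i = 0" if "k \<notin> block_set (block i)" for k
    using that block_iff basis_vec_nonzero_imp_block by metis
  then have "(\<Sum>k<start b. basis_vec k i * basis_vec k i') = (\<Sum>k\<in>block_set (block i). basis_vec k i * basis_vec k i')"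
    using block_set_subset[OF assms] by (intro sum.mono_neutral_right) auto
  then show ?thesis by (simp only: sum_block_set_basis_vec_complete)
qed

lemma lpsum_block_coeff_start: "lpsum basis_vec (block_coeff x) (start b) i = (if i < start b then x i else 0)"
proof -
  have coeff_eq: "block_coeff x k = (\<Sum>i'<start b. x i' * basis_vec k i')" if "k < start b" for k
  proof -
    have "basis_vec k i' = 0" if "i' \<notin> block_set (block k)" for i'
      using that block_iff basis_vec_nonzero_imp_block by metis
    then show ?thesis
      unfolding block_coeff_def using block_set_subset[OF that] by (intro sum.mono_neutral_left) auto
  qed
  have "lpsum basis_vec (block_coeff x) (start b) i = (\<Sum>k<start b. (\<Sum>i'<start b. x i' * basis_vec k i') * basis_vec k i)"
    unfolding lpsum_def by (intro sum.cong refl) (simp add: coeff_eq)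
  also have "\<dots> = (\<Sum>k<start b. \<Sum>i'<start b. x i' * (basis_vec k i' * basis_vec k i))"
    by (simp only: sum_distrib_right mult.assoc)
  also have "\<dots> = (\<Sum>i'<start b. x i' * (\<Sum>k<start b. basis_vec k i' * basis_vec k i))"
    by (subst sum.swap) (simp only: sum_distrib_left)
  also have "\<dots> = (\<Sum>i'<start b. if i' = i then x i' else 0)"
    by (intro sum.cong refl) (simp add: sum_basis_vec_complete_below_start)
  also have "\<dots> = (if i < start b then x i else 0)"
    by (simp add: sum.delta)
  finally show ?thesis .
qed

lemma sum_block_set_block_coeff_mult:
  assumes "i \<in> block_set b"
  shows "(\<Sum>k\<in>block_set b. block_coeff x k * basis_vec k i) = x i"
proof -
  have "lpsum basis_vec (block_coeff x) (start (Suc b)) i =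
      lpsum basis_vec (block_coeff x) (start b) i + (\<Sum>k\<in>block_set b. block_coeff x k * basis_vec k i)"
    unfolding block_set_def by (rule lpsum_split) (simp add: start_mono)
  then show ?thesis
    using assms lpsum_block_coeff_start[of x b i] lpsum_block_coeff_start[of x "Suc b" i]
    by (simp add: block_set_def del: start_Suc)
qed

lemma sum_block_set_block_coeff_sq: "(\<Sum>k\<in>block_set b. (block_coeff x k)^2) = (\<Sum>i\<in>block_set b. (x i)^2)"
proof -
  have "(\<Sum>k\<in>block_set b. (block_coeff x k)^2) = (\<Sum>k\<in>block_set b. block_coeff x k * (\<Sum>i\<in>block_set b. x i * basis_vec k i))"
    by (intro sum.cong refl) (simp add: power2_eq_square block_coeff_def block_iff[symmetric])
  also have "\<dots> = (\<Sum>k\<in>block_set b. \<Sum>i\<in>block_set b. x i * (block_coeff x k * basis_vec k i))"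
    by (simp only: sum_distrib_left mult.left_commute)
  also have "\<dots> = (\<Sum>i\<in>block_set b. x i * (\<Sum>k\<in>block_set b. block_coeff x k * basis_vec k i))"
    by (subst sum.swap) (simp only: sum_distrib_left)
  also have "\<dots> = (\<Sum>i\<in>block_set b. (x i)^2)"
    by (simp add: sum_block_set_block_coeff_mult power2_eq_square)
  finally show ?thesis .
qed

lemma lpsum_basis_vec_vanish: "start (Suc (block n)) \<le> i \<Longrightarrow> lpsum basis_vec a n i = 0"
proof -
  assume i: "start (Suc (block n)) \<le> i"
  have "basis_vec k i = 0" if "k < n" for k
  proof (rule ccontr)
    assume "basis_vec k i \<noteq> 0"
    then have "i < start (Suc (block k))" by (rule basis_vec_support)
    moreover have "start (Suc (block k)) \<le> start (Suc (block n))"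
      using that block_mono by (intro start_mono) simp
    ultimately show False using i by simp
  qed
  then show ?thesis by (simp add: lpsum_def)
qed

lemma summable_sq_lpsum_basis_vec: "summable (\<lambda>i. (lpsum basis_vec a n i)^2)"
  by (rule summable_finite[of "{..<start (Suc (block n))}"]) (auto simp: lpsum_basis_vec_vanish simp del: start_Suc)

lemma sum_sq_lpsum_block_coeff_diff_le:
  assumes "x \<in> l2"
  shows "(\<Sum>i. (lpsum basis_vec (block_coeff x) n i - x i)^2) \<le> 4 * (\<Sum>i. (x (i + start (block n)))^2)"
proof -
  define s where "s = start (block n)"
  define a where "a k = (if s \<le> k then block_coeff x k else 0)" for k
  define P where "P = lpsum basis_vec a n"
  define y where "y i = (if s \<le> i then x i else 0)" for i
  have x_sq: "summable (\<lambda>i. (x i)^2)" using assms by (simp add: l2_def)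
  have y_sq: "summable (\<lambda>i. (y i)^2)"
    by (rule summable_comparison_test[OF _ x_sq]) (auto simp: y_def)
  have P_sq: "summable (\<lambda>i. (P i)^2)" unfolding P_def by (rule summable_sq_lpsum_basis_vec)
  have "s \<le> n" unfolding s_def by (rule block_lb)
  \<comment> \<open>Below s the partial sum reproduces x exactly; P is the part coming from the current block.\<close>
  have diff: "lpsum basis_vec (block_coeff x) n i - x i = P i - y i" for i
  proof -
    have "P i = (\<Sum>k\<in>{s..<n}. block_coeff x k * basis_vec k i)"
      unfolding P_def lpsum_split[OF \<open>s \<le> n\<close>] by (simp add: lpsum_def a_def)
    then show ?thesis
      using lpsum_split[OF \<open>s \<le> n\<close>, of basis_vec "block_coeff x" i] lpsum_block_coeff_start[of x "block n" i]
      by (simp add: y_def s_def)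
  qed
  have "(\<Sum>i. (P i)^2) = (\<Sum>k<n. (a k)^2)"
    unfolding P_def by (rule sum_sq_lpsum_orthonormal[OF basis_vec_support l2inner_basis_vec])
  also have "\<dots> = (\<Sum>k\<in>{s..<n}. (block_coeff x k)^2)"
    by (rule trans[OF sum.mono_neutral_right[of "{..<n}" "{s..<n}"]]) (auto simp: a_def)
  also have "\<dots> \<le> (\<Sum>k\<in>block_set (block n). (block_coeff x k)^2)"
    using block_ub[of n] by (intro sum_mono2) (auto simp: block_set_def s_def simp del: start_Suc)
  also have "\<dots> = (\<Sum>i\<in>block_set (block n). (y i)^2)"
    unfolding sum_block_set_block_coeff_sq by (intro sum.cong) (auto simp: y_def s_def block_set_def)
  also have "\<dots> \<le> (\<Sum>i. (y i)^2)" by (rule sum_le_suminf[OF y_sq]) auto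
  finally have P_le_y: "(\<Sum>i. (P i)^2) \<le> (\<Sum>i. (y i)^2)" .
  have "(\<Sum>i. (lpsum basis_vec (block_coeff x) n i - x i)^2) = (\<Sum>i. (P i - y i)^2)" by (simp add: diff)
  also have "\<dots> \<le> 2 * (\<Sum>i. (P i)^2) + 2 * (\<Sum>i. (y i)^2)"
    by (rule suminf_sq_diff_le[OF P_sq y_sq])
  also have "\<dots> \<le> 4 * (\<Sum>i. (y i)^2)" using P_le_y by simp
  also have "(\<Sum>i. (y i)^2) = (\<Sum>i. (x (i + s))^2)"
    using suminf_split_initial_segment[OF y_sq, of s] by (simp add: y_def)
  finally show ?thesis unfolding s_def .
qed

lemma has_expansion_block_coeff:
  assumes "x \<in> l2"
  shows "has_expansion basis_vec (block_coeff x) x"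
proof -
  have x_sq: "summable (\<lambda>i. (x i)^2)" using assms by (simp add: l2_def)
  have "filterlim (\<lambda>n. start (block n)) at_top sequentially"
    unfolding filterlim_at_top eventually_sequentially
  proof (intro allI exI impI)
    fix Z n assume "start Z \<le> n"
    then have "Z < Suc (block n)"
      using block_ub[of n] start_mono[of "Suc (block n)" Z] by (meson le_trans not_le)
    then show "Z \<le> start (block n)" using start_ge[of "block n"] by simp
  qed
  then have "(\<lambda>n. \<Sum>i. (x (i + start (block n)))^2) \<longlonglongrightarrow> 0"
    using filterlim_compose[OF suminf_exist_split2[OF x_sq]] by blast
  then have "(\<lambda>n. 2 * sqrt (\<Sum>i. (x (i + start (block n)))^2)) \<longlonglongrightarrow> 2 * sqrt 0"
    by (intro tendsto_mult tendsto_const tendsto_real_sqrt)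
  then have upper: "(\<lambda>n. 2 * sqrt (\<Sum>i. (x (i + start (block n)))^2)) \<longlonglongrightarrow> 0" by simp
  show ?thesis unfolding has_expansion_def
  proof (rule tendsto_sandwich[OF always_eventually always_eventually tendsto_const upper]; intro allI)
    fix n
    show "0 \<le> l2norm (\<lambda>i. lpsum basis_vec (block_coeff x) n i - x i)"
      unfolding l2norm_def
      by (intro real_sqrt_ge_zero suminf_nonneg summable_sq_diff[OF summable_sq_lpsum_basis_vec x_sq]) simp
    have "l2norm (\<lambda>i. lpsum basis_vec (block_coeff x) n i - x i) \<le> sqrt (4 * (\<Sum>i. (x (i + start (block n)))^2))"
      unfolding l2norm_def by (rule real_sqrt_le_mono[OF sum_sq_lpsum_block_coeff_diff_le[OF assms]])
    then show "l2norm (\<lambda>i. lpsum basis_vec (block_coeff x) n i - x i) \<le> 2 * sqrt (\<Sum>i. (x (i + start (block n)))^2)"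
      by (simp add: real_sqrt_mult)
  qed
qed

lemma block_coeff_lpsum:
  assumes "k < n"
  shows "block_coeff (lpsum basis_vec a n) k = a k"
proof -
  have "block_coeff (lpsum basis_vec a n) k =
      (\<Sum>i\<in>block_set (block k). \<Sum>l<n. a l * (basis_vec l i * basis_vec k i))"
    unfolding block_coeff_def lpsum_def by (simp only: sum_distrib_right mult.assoc)
  also have "\<dots> = (\<Sum>l<n. a l * (\<Sum>i\<in>block_set (block k). basis_vec l i * basis_vec k i))"
    by (simp only: sum.swap[of _ "block_set (block k)"] sum_distrib_left)
  also have "\<dots> = a k"
    using assms by (simp only: sum_block_set_basis_vec_orthonormal) (simp add: if_distrib sum.delta cong: if_cong)
  finally show ?thesis .
qed

lemma block_coeff_sq_le:
  assumes "summable (\<lambda>i. (y i)^2)"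
  shows "(block_coeff y k)^2 \<le> (\<Sum>i. (y i)^2)"
proof -
  have "(block_coeff y k)^2 \<le>
      (\<Sum>i\<in>block_set (block k). (y i)^2) * (\<Sum>i\<in>block_set (block k). (basis_vec k i)^2)"
    unfolding block_coeff_def by (rule Cauchy_Schwarz_ineq_sum)
  also have "(\<Sum>i\<in>block_set (block k). (basis_vec k i)^2) = 1"
    using sum_block_set_basis_vec_orthonormal[of k k] by (simp add: power2_eq_square)
  also have "(\<Sum>i\<in>block_set (block k). (y i)^2) \<le> (\<Sum>i. (y i)^2)"
    by (rule sum_le_suminf[OF assms]) auto
  finally show ?thesis by simp
qed

lemma has_expansion_imp_block_coeff:
  assumes "x \<in> l2" and expansion: "has_expansion basis_vec a x"
  shows "a = block_coeff x"
proof
  fix k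
  have x_sq: "summable (\<lambda>i. (x i)^2)" using assms by (simp add: l2_def)
  define D where "D n = (\<lambda>i. lpsum basis_vec a n i - x i)" for n
  have D_sq: "summable (\<lambda>i. (D n i)^2)" for n
    unfolding D_def by (rule summable_sq_diff[OF summable_sq_lpsum_basis_vec x_sq])
  have lim: "(\<lambda>n. (l2norm (D n))^2) \<longlonglongrightarrow> 0"
    using tendsto_power[OF expansion[unfolded has_expansion_def], of 2] unfolding D_def by simp
  have bound: "(a k - block_coeff x k)^2 \<le> (l2norm (D n))^2" if "k < n" for n
  proof -
    have "a k - block_coeff x k = block_coeff (D n) k"
      using block_coeff_lpsum[OF that] by (simp add: D_def block_coeff_def algebra_simps sum_subtractf)
    then show ?thesis
      using block_coeff_sq_le[OF D_sq] by (simp add: l2norm_def suminf_nonneg[OF D_sq])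
  qed
  have "(a k - block_coeff x k)^2 \<le> 0"
    by (rule LIMSEQ_le_const[OF lim]) (use bound in \<open>auto intro!: exI[of _ "Suc k"]\<close>)
  then show "a k = block_coeff x k" by simp
qed

lemma is_basis_l2_basis_vec: "is_basis_l2 basis_vec"
  unfolding is_basis_l2_def
  using basis_vec_in_l2 has_expansion_block_coeff has_expansion_imp_block_coeff by blast

lemma lpsum_basis_vec_outside_block:
  assumes "\<And>k. a k \<noteq> 0 \<Longrightarrow> block k = b" "block i \<noteq> b"
  shows "lpsum basis_vec a n i = 0"
proof -
  have "a k * basis_vec k i = 0" for k
    using assms basis_vec_nonzero_imp_block[of k i] by fastforce
  then show ?thesis unfolding lpsum_def by (simp only: sum.neutral_const)
qed

lemma lpsum_basis_vec_in_block:
  assumes "\<And>k. k < start b \<Longrightarrow> a k = 0" "j < d b" "n \<le> d b"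
  shows "lpsum basis_vec a (start b + n) (start b + j) = (\<Sum>r<n. a (start b + r) * Q b j r)"
proof -
  have "lpsum basis_vec a (start b + n) (start b + j) = (\<Sum>k\<in>{0 + start b..<n + start b}. a k * basis_vec k (start b + j))"
    using lpsum_split[of "start b" "start b + n" basis_vec a "start b + j"] assms(1)
    by (simp add: lpsum_def add.commute)
  also have "\<dots> = (\<Sum>r<n. a (start b + r) * basis_vec (start b + r) (start b + j))"
    by (simp only: sum.shift_bounds_nat_ivl atLeast0LessThan add.commute)
  also have "\<dots> = (\<Sum>r<n. a (start b + r) * Q b j r)"
    using assms(2,3) by (intro sum.cong refl) (simp add: basis_vec_start_add)
  finally show ?thesis .
qed

end

section \<open>The counterexample\<close>

text \<open>A named constant rather than a lambda, so that the simplifier cannot rewrite the locale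
  parameter inside the interpreted constants such as hilbert.start.\<close>
definition hilbert_size :: "nat \<Rightarrow> nat" where
  "hilbert_size M = 2*M+2"

interpretation hilbert: orthogonal_blocks hilbert_size hilbert_block
proof
  show "0 < hilbert_size b" for b by (simp add: hilbert_size_def)
  show "k < hilbert_size b \<Longrightarrow> l < hilbert_size b \<Longrightarrow>
      (\<Sum>i<hilbert_size b. hilbert_block b i k * hilbert_block b i l) = (if k = l then 1 else 0)" for b k l
    unfolding hilbert_size_def by (rule hilbert_block_orthonormal_columns)
  show "i < hilbert_size b \<Longrightarrow> i' < hilbert_size b \<Longrightarrow>
      (\<Sum>k<hilbert_size b. hilbert_block b i k * hilbert_block b i' k) = (if i = i' then 1 else 0)" for b i i'
    unfolding hilbert_size_def by (rule hilbert_block_orthonormal_rows)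
qed

definition flat_coeffs :: "nat \<Rightarrow> nat \<Rightarrow> real" where
  "flat_coeffs b k = (if hilbert.start b \<le> k \<and> k < hilbert.start b + (2*b+1) then 1 / sqrt (real (2*b+1)) else 0)"

lemma l2norm_lpsum_flat_coeffs: "l2norm (lpsum hilbert.basis_vec (flat_coeffs b) (hilbert.start b + (2*b+1))) = 1"
proof -
  have "(\<Sum>k<hilbert.start b + (2*b+1). (flat_coeffs b k)^2) = (\<Sum>k\<in>{hilbert.start b..<hilbert.start b + (2*b+1)}. 1 / real (2*b+1))"
    by (rule sum.mono_neutral_cong_right) (auto simp: flat_coeffs_def power_divide)
  also have "\<dots> = 1" by simp
  finally show ?thesis by (simp add: hilbert.l2norm_lpsum_basis_vec)
qed

lemma lpsum_flat_coeffs_diagonal: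
  assumes "j < 2*b+1"
  shows "lpsum hilbert.basis_vec (flat_coeffs b) (hilbert.start b + Suc j) (hilbert.start b + j) =
    hilbert_partial_sum b j / sqrt (real (2*b+1))"
proof -
  have "lpsum hilbert.basis_vec (flat_coeffs b) (hilbert.start b + Suc j) (hilbert.start b + j) =
      (\<Sum>r<Suc j. flat_coeffs b (hilbert.start b + r) * hilbert_block b j r)"
    using assms by (intro hilbert.lpsum_basis_vec_in_block) (auto simp: flat_coeffs_def hilbert_size_def)
  also have "\<dots> = (\<Sum>r<Suc j. hilbert_kernel b (real (j - r)) / sqrt (real (2*b+1)))"
    using assms by (intro sum.cong refl) (simp add: flat_coeffs_def hilbert_block_def bordered_def of_nat_diff)
  also have "\<dots> = (\<Sum>r<Suc j. hilbert_kernel b (real (j - r))) / sqrt (real (2*b+1))"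
    by (simp only: sum_divide_distrib)
  also have "(\<Sum>r<Suc j. hilbert_kernel b (real (j - r))) = hilbert_partial_sum b j"
    using sum.nat_diff_reindex[of "\<lambda>r. hilbert_kernel b (real r)" "Suc j"]
    by (simp add: hilbert_partial_sum_def lessThan_Suc_atMost)
  finally show ?thesis .
qed

lemma Max_lpsum_flat_coeffs_ge:
  assumes "finite S" "\<And>j. j < 2*b+1 \<Longrightarrow> hilbert.start b + Suc j \<in> p ` S"
  shows "harm b / pi - 1/2 \<le> l2norm (\<lambda>i. Max ((\<lambda>n. \<bar>lpsum hilbert.basis_vec (flat_coeffs b) (p n) i\<bar>) ` S))"
proof -
  define s where "s = hilbert.start b"
  have "harm b / pi - 1/2 \<le> sqrt (\<Sum>j<2*b+1. (hilbert_partial_sum b j / sqrt (real (2*b+1)))^2)"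
    by (rule hilbert_partial_sums_norm_ge)
  also have "\<dots> = sqrt (\<Sum>i\<in>{s..<s + (2*b+1)}. (hilbert_partial_sum b (i - s) / sqrt (real (2*b+1)))^2)"
    using sum.shift_bounds_nat_ivl[of "\<lambda>i. (hilbert_partial_sum b (i - s) / sqrt (real (2*b+1)))^2" 0 s "2*b+1"]
    by (simp add: atLeast0LessThan add.commute)
  also have "\<dots> \<le> l2norm (\<lambda>i. Max ((\<lambda>n. \<bar>lpsum hilbert.basis_vec (flat_coeffs b) (p n) i\<bar>) ` S))"
  proof (rule l2norm_Max_abs_ge[where A = "hilbert.block_set b"])
    show "S \<noteq> {}" using assms(2)[of 0] by auto
    show "lpsum hilbert.basis_vec (flat_coeffs b) (p n) i = 0" if "i \<notin> hilbert.block_set b" for n i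
      using that by (intro hilbert.lpsum_basis_vec_outside_block)
        (auto simp: flat_coeffs_def hilbert.block_iff[symmetric] hilbert_size_def intro: hilbert.block_eqI split: if_splits)
    show "{s..<s + (2*b+1)} \<subseteq> hilbert.block_set b"
      by (auto simp: s_def hilbert.block_set_def hilbert_size_def)
    fix i assume "i \<in> {s..<s + (2*b+1)}"
    then obtain n where "n \<in> S" "p n = s + Suc (i - s)" using assms(2)[of "i - s"] s_def by force
    then show "\<exists>n\<in>S. \<bar>hilbert_partial_sum b (i - s) / sqrt (real (2*b+1))\<bar> \<le> \<bar>lpsum hilbert.basis_vec (flat_coeffs b) (p n) i\<bar>"
      using lpsum_flat_coeffs_diagonal[of "i - s" b] \<open>i \<in> {s..<s + (2*b+1)}\<close> unfolding s_def by force
  qed (use assms(1) in auto)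
  finally show ?thesis .
qed

definition flat_vector :: "nat \<Rightarrow> nat \<Rightarrow> real" where
  "flat_vector b = lpsum hilbert.basis_vec (flat_coeffs b) (hilbert.start b + (2*b+1))"

lemma flat_vector_in_span_E: "flat_vector b \<in> span_E hilbert.basis_vec"
  and coef_flat_vector: "coef hilbert.basis_vec (flat_vector b) = flat_coeffs b"
proof -
  have "flat_vector b \<in> l2"
    unfolding flat_vector_def l2_def by (simp add: hilbert.summable_sq_lpsum_basis_vec)
  moreover have "has_expansion hilbert.basis_vec (flat_coeffs b) (flat_vector b)"
    unfolding flat_vector_def by (rule has_expansion_lpsum) (simp add: flat_coeffs_def)
  ultimately show "flat_vector b \<in> span_E hilbert.basis_vec"
    and "coef hilbert.basis_vec (flat_vector b) = flat_coeffs b"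
    by (auto simp: span_E_def intro: coef_eqI[OF hilbert.is_basis_l2_basis_vec])
qed

lemma greedy_sum_flat_vector:
  assumes "n \<le> 2*b+1"
  shows "greedy_sum hilbert.basis_vec (flat_vector b) n = lpsum hilbert.basis_vec (flat_coeffs b) (hilbert.start b + n)"
proof
  fix i
  define s where "s = hilbert.start b"
  have "lpsum hilbert.basis_vec (flat_coeffs b) s i = 0"
    by (simp add: lpsum_def flat_coeffs_def s_def)
  then have "lpsum hilbert.basis_vec (flat_coeffs b) (s + n) i =
      (\<Sum>k\<in>{s..<s+n}. flat_coeffs b k * hilbert.basis_vec k i)"
    using lpsum_split[of s "s + n" hilbert.basis_vec "flat_coeffs b" i] by simp
  also have "\<dots> = (\<Sum>k\<in>{s..<s+n}. 1 / sqrt (real (2*b+1)) * hilbert.basis_vec k i)"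
    using assms by (intro sum.cong refl) (auto simp: flat_coeffs_def s_def)
  also have "\<dots> = greedy_sum hilbert.basis_vec (flat_vector b) n i"
  proof -
    have "greedy_sum hilbert.basis_vec (flat_vector b) n =
        (\<lambda>i. \<Sum>k\<in>{s..<s+n}. 1 / sqrt (real (2*b+1)) * hilbert.basis_vec k i)"
      by (rule greedy_sum_flat[where N = "2*b+1"]) (use assms in \<open>simp_all add: coef_flat_vector flat_coeffs_def s_def\<close>)
    then show ?thesis by simp
  qed
  finally show "greedy_sum hilbert.basis_vec (flat_vector b) n i = lpsum hilbert.basis_vec (flat_coeffs b) (hilbert.start b + n) i"
    by (simp add: s_def)
qed

lemma not_bibasic: "\<not> bibasic hilbert.basis_vec"
proof
  assume "bibasic hilbert.basis_vec"
  then obtain M where M: "\<And>m a. 1 \<le> m \<Longrightarrow>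
      l2norm (\<lambda>i. Max ((\<lambda>n. \<bar>lpsum hilbert.basis_vec a n i\<bar>) ` {1..m})) \<le> M * l2norm (lpsum hilbert.basis_vec a m)"
    unfolding bibasic_def by blast
  obtain b where b: "M < harm b / pi - 1/2" using harm_div_pi_unbounded by blast
  define m where "m = hilbert.start b + (2*b+1)"
  have "harm b / pi - 1/2 \<le> l2norm (\<lambda>i. Max ((\<lambda>n. \<bar>lpsum hilbert.basis_vec (flat_coeffs b) n i\<bar>) ` {1..m}))"
    using Max_lpsum_flat_coeffs_ge[of "{1..m}" b id] by (force simp: m_def)
  also have "\<dots> \<le> M * l2norm (lpsum hilbert.basis_vec (flat_coeffs b) m)" by (rule M) (simp add: m_def)
  also have "\<dots> = M" using l2norm_lpsum_flat_coeffs[of b] unfolding m_def by simp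
  finally show False using b by simp
qed

lemma not_uniformly_quasi_greedy: "\<not> uniformly_quasi_greedy hilbert.basis_vec"
proof
  assume "uniformly_quasi_greedy hilbert.basis_vec"
  then obtain C where C: "\<And>m x. 1 \<le> m \<Longrightarrow> x \<in> span_E hilbert.basis_vec \<Longrightarrow> l2norm x = 1 \<Longrightarrow>
      l2norm (\<lambda>i. Max ((\<lambda>n. \<bar>greedy_sum hilbert.basis_vec x n i\<bar>) ` {1..m})) \<le> C"
    unfolding uniformly_quasi_greedy_def by blast
  obtain b where b: "C < harm b / pi - 1/2" using harm_div_pi_unbounded by blast
  have "harm b / pi - 1/2 \<le>
      l2norm (\<lambda>i. Max ((\<lambda>n. \<bar>lpsum hilbert.basis_vec (flat_coeffs b) (hilbert.start b + n) i\<bar>) ` {1..2*b+1}))"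
    using Max_lpsum_flat_coeffs_ge[of "{1..2*b+1}" b "\<lambda>n. hilbert.start b + n"] by force
  also have "\<dots> = l2norm (\<lambda>i. Max ((\<lambda>n. \<bar>greedy_sum hilbert.basis_vec (flat_vector b) n i\<bar>) ` {1..2*b+1}))"
    using greedy_sum_flat_vector by (intro arg_cong[where f = l2norm] ext arg_cong[where f = Max] image_cong) auto
  also have "\<dots> \<le> C"
    using flat_vector_in_span_E l2norm_lpsum_flat_coeffs by (intro C) (simp_all add: flat_vector_def)
  finally show False using b by simp
qed

theorem proposition4p3:
  shows "\<exists>u :: nat \<Rightarrow> nat \<Rightarrow> real.
           is_basis_l2 u \<and> isometrically_equivalent u canon \<and>
           (\<forall>j k. l2inner (u j) (u k) = (if j = k then 1 else 0)) \<and>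
           \<not> bibasic u \<and> \<not> uniformly_quasi_greedy u"
  using hilbert.is_basis_l2_basis_vec hilbert.isometrically_equivalent_canon hilbert.l2inner_basis_vec
    not_bibasic not_uniformly_quasi_greedy by blast

end
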